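(* Let $X$ be an $n$-dimensional polyhedral normed space and let $Y \subseteq X$ be a subspace of dimension $k$, where $1 \leq k \leq n-1$. Let $l$ be the minimal number of pairs on which a Chalmers–Metcalf operator for $Y$ can be supported and let $m$ be the minimal number of norming pairs that a minimal projection from $X$ onto $Y$ can have. Then $k(n-k)-m+1 \leq \dim \mathcal{P}_{\min}(X, Y) \leq k(n-k)-l+1$.
   Context: A normed space $X=(\mathbb{R}^n,\|\cdot\|)$ is polyhedral if its unit ball is a convex polytope. A projection onto $Y$ is a linear $P:X\to Y$ with $P|_Y=\mathrm{id}_Y$; $\lambda(Y,X)$ is the infimum of the operator norms of projections and $\mathcal{P}_{\min}(X,Y)$ the set of projections of norm $\lambda(Y,X)$ (minimal projections); $\dim\mathcal{P}_{\min}(X,Y)$ is the affine dimension of this convex subset of $\mathcal{L}(X,X)$. A norming pair for a projection $P$ is a pair $(x,f)\in \mathrm{ext}\,B_X\times \mathrm{ext}\,B_{X^*}$ with $f(P(x))=\|P\|$. For $x\in X$, $f\in X^*$, $x\otimes f$ is the operator $z\mapsto f(z)x$. A Chalmers–Metcalf operator for $Y$ is an operator $T=\sum_{i=1}^{l}\alpha_i x_i\otimes f_i:X\to X$ with $(x_i,f_i)\in\mathrm{ext}\,B_X\times\mathrm{ext}\,B_{X^*}$, $\alpha_i>0$, $\sum_i\alpha_i=1$, $T(Y)\subseteq Y$, and $f_i(P_0(x_i))=\|P_0\|=\lambda(Y,X)$ for all $i$ and some fixed minimal projection $P_0$; it is said to be supported on the $l$ pairs $(x_i,f_i)$. *)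

theory Defs
  imports "HOL-Analysis.Analysis"
begin

text \<open>X = (R^n, N): the space real^'n equipped with an arbitrary norm N.
  Functionals in X* are represented by vectors u via z \<mapsto> u \<bullet> z;
  operators X \<to> X are represented by matrices real^'n^'n acting by *v.\<close>

definition is_norm :: "(real^'n \<Rightarrow> real) \<Rightarrow> bool" where
  "is_norm N \<longleftrightarrow> (\<forall>x. 0 \<le> N x) \<and> (\<forall>x. N x = 0 \<longleftrightarrow> x = 0)
     \<and> (\<forall>c x. N (c *\<^sub>R x) = \<bar>c\<bar> * N x) \<and> (\<forall>x y. N (x + y) \<le> N x + N y)"

definition unit_ball :: "(real^'n \<Rightarrow> real) \<Rightarrow> (real^'n) set" where
  "unit_ball N = {x. N x \<le> 1}"

definition polyhedral :: "(real^'n \<Rightarrow> real) \<Rightarrow> bool" where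
  "polyhedral N \<longleftrightarrow> is_norm N \<and> polytope (unit_ball N)"

definition dual_ball :: "(real^'n \<Rightarrow> real) \<Rightarrow> (real^'n) set" where
  "dual_ball N = {u. \<forall>x. N x \<le> 1 \<longrightarrow> u \<bullet> x \<le> 1}"

definition op_norm :: "(real^'n \<Rightarrow> real) \<Rightarrow> real^'n^'n \<Rightarrow> real" where
  "op_norm N P = Sup {N (P *v x) | x. N x \<le> 1}"

definition is_projection :: "real^'n^'n \<Rightarrow> (real^'n) set \<Rightarrow> bool" where
  "is_projection P Y \<longleftrightarrow> (\<forall>x. P *v x \<in> Y) \<and> (\<forall>y\<in>Y. P *v y = y)"

definition proj_const :: "(real^'n \<Rightarrow> real) \<Rightarrow> (real^'n) set \<Rightarrow> real" where
  "proj_const N Y = Inf {op_norm N P | P. is_projection P Y}"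

definition min_projections :: "(real^'n \<Rightarrow> real) \<Rightarrow> (real^'n) set \<Rightarrow> (real^'n^'n) set" where
  "min_projections N Y = {P. is_projection P Y \<and> op_norm N P = proj_const N Y}"

definition norming_pairs :: "(real^'n \<Rightarrow> real) \<Rightarrow> real^'n^'n \<Rightarrow> ((real^'n) \<times> (real^'n)) set" where
  "norming_pairs N P = {(x, f). x extreme_point_of (unit_ball N) \<and> f extreme_point_of (dual_ball N)
      \<and> f \<bullet> (P *v x) = op_norm N P}"

text \<open>There is a Chalmers--Metcalf operator for Y supported on l pairs
  (x i, f i), i < l; the operator is T z = sum_i alpha_i (f_i . z) x_i.\<close>
definition CM_supported :: "(real^'n \<Rightarrow> real) \<Rightarrow> (real^'n) set \<Rightarrow> nat \<Rightarrow> bool" where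
  "CM_supported N Y l \<longleftrightarrow> (\<exists>(x::nat \<Rightarrow> real^'n) (f::nat \<Rightarrow> real^'n) (\<alpha>::nat \<Rightarrow> real) P0.
      P0 \<in> min_projections N Y \<and>
      (\<forall>i<l. x i extreme_point_of (unit_ball N) \<and> f i extreme_point_of (dual_ball N) \<and>
              \<alpha> i > 0 \<and> f i \<bullet> (P0 *v x i) = proj_const N Y) \<and>
      (\<Sum>i<l. \<alpha> i) = 1 \<and>
      (\<forall>y\<in>Y. (\<Sum>i<l. (\<alpha> i * (f i \<bullet> y)) *\<^sub>R x i) \<in> Y))"

definition min_CM_support :: "(real^'n \<Rightarrow> real) \<Rightarrow> (real^'n) set \<Rightarrow> nat" where
  "min_CM_support N Y = (LEAST l. CM_supported N Y l)"

definition min_norming_pairs :: "(real^'n \<Rightarrow> real) \<Rightarrow> (real^'n) set \<Rightarrow> nat" where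
  "min_norming_pairs N Y = (LEAST m. \<exists>P\<in>min_projections N Y. card (norming_pairs N P) = m)"

end

theory Submission
  imports Defs
begin

(*
  The operator norm is the maximum F of the finitely many linear forms Q \<mapsto> f (Q x), where x and
  f run over the extreme points of the unit balls of X and X*, and the projections onto Y form an
  affine space whose direction space V = {D. range D \<subseteq> Y, D Y = 0} has dimension k (n - k). So
  minimal projections are the minimizers of F on that affine space, norming pairs are the forms
  active at a minimizer, and a Chalmers-Metcalf operator is a convex combination of forms active
  at a minimizer whose restriction to V vanishes.

  At a minimizer P no direction in V decreases all active forms, so by separation 0 is a convex
  combination of their gradients on V; these span at most m - 1 dimensions, and P + D is still
  minimal for every small D in V orthogonal to all of them, which gives the lower bound.
  Conversely, by averaging, each form of a Chalmers-Metcalf combination takes the value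
  \<lambda>(Y, X) at every minimal projection, which confines the minimal projections to a
  translate of the orthogonal complement in V of the gradients of the combination; by
  Caratheodory's theorem a combination with the fewest terms l has gradients spanning at least
  l - 1 dimensions, which gives the upper bound.
*)

lemma continuous_on_Max:
  fixes f :: "'i \<Rightarrow> 'a::topological_space \<Rightarrow> real"
  assumes "finite A" "A \<noteq> {}" "\<And>i. i \<in> A \<Longrightarrow> continuous_on S (f i)"
  shows "continuous_on S (\<lambda>x. Max ((\<lambda>i. f i x) ` A))"
  using assms
proof (induction A rule: finite_ne_induct)
  case (insert i A)
  then have "continuous_on S (\<lambda>x. max (f i x) (Max ((\<lambda>i. f i x) ` A)))"
    by (intro continuous_on_max) auto
  with insert show ?case by simp
qed simp

definition orth_proj :: "'a::euclidean_space set \<Rightarrow> 'a \<Rightarrow> 'a" where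
  "orth_proj U x = (SOME y. y \<in> U \<and> x - y \<in> U\<^sup>\<bottom>)"

lemma
  assumes "subspace U"
  shows orth_proj_in: "orth_proj U x \<in> U"
    and orth_proj_diff_in: "x - orth_proj U x \<in> U\<^sup>\<bottom>"
proof -
  obtain y z where "y \<in> U" "z \<in> U\<^sup>\<bottom>" "x = y + z"
    using subspace_sum_orthogonal_comp[OF assms] by (metis UNIV_I set_plus_elim)
  then have "\<exists>y. y \<in> U \<and> x - y \<in> U\<^sup>\<bottom>"
    by (metis add_diff_cancel_left')
  from someI_ex[OF this] show "orth_proj U x \<in> U" "x - orth_proj U x \<in> U\<^sup>\<bottom>"
    unfolding orth_proj_def by auto
qed

lemma inner_orth_proj:
  assumes "subspace U" "u \<in> U"
  shows "u \<bullet> orth_proj U x = u \<bullet> x"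
  using orth_proj_diff_in[OF assms(1), of x] assms(2)
  by (simp add: orthogonal_comp_def orthogonal_def inner_diff_right)

lemma orthogonal_comp_span [simp]: "(span S)\<^sup>\<bottom> = S\<^sup>\<bottom>"
  using orthogonal_to_span
  by (fastforce simp: orthogonal_comp_def orthogonal_commute intro: span_base)

lemma dim_Int_orthogonal_comp:
  fixes U :: "'a::euclidean_space set"
  assumes "subspace U" "S \<subseteq> U"
  shows "dim (U \<inter> S\<^sup>\<bottom>) + dim S = dim U"
proof -
  have "{y \<in> U. \<forall>x \<in> span S. orthogonal x y} = U \<inter> (span S)\<^sup>\<bottom>"
    by (auto simp: orthogonal_comp_def)
  then show ?thesis
    using dim_subspace_orthogonal_to_vectors[OF subspace_span assms(1) span_minimal[OF assms(2,1)]]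
    by simp
qed

lemma inner_orthonormal:
  assumes "pairwise orthogonal B" "\<And>b. b \<in> B \<Longrightarrow> norm b = 1" "b \<in> B" "c \<in> B"
  shows "b \<bullet> c = (if b = c then 1 else 0)"
  using assms norm_eq_1 by (auto simp: pairwise_def orthogonal_def)

lemma orthonormal_expansion:
  fixes x :: "'a::euclidean_space"
  assumes "finite B" "pairwise orthogonal B" "\<And>b. b \<in> B \<Longrightarrow> norm b = 1" "x \<in> span B"
  shows "x = (\<Sum>b\<in>B. (b \<bullet> x) *\<^sub>R b)"
proof -
  obtain u where u: "x = (\<Sum>b\<in>B. u b *\<^sub>R b)"
    using assms(4) span_finite[OF assms(1)] by auto
  have "b \<bullet> x = u b" if "b \<in> B" for b
  proof -
    have "b \<bullet> x = (\<Sum>c\<in>B. if c = b then u c else 0)"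
      using inner_orthonormal[OF assms(2,3) that]
      by (auto simp: u inner_sum_right intro!: sum.cong)
    then show ?thesis
      using assms(1) that by simp
  qed
  then show ?thesis
    by (simp add: u)
qed

lemma aff_dim_eq_dim_if_zero_in_convex_hull:
  fixes S :: "'a::euclidean_space set"
  assumes "0 \<in> convex hull S"
  shows "aff_dim S = int (dim S)"
  using aff_dim_eq_dim[of 0 S] assms convex_hull_subset_affine_hull by auto

lemma convex_hull_finite_indexed:
  fixes G :: "'a::real_vector set"
  assumes "finite G" "y \<in> convex hull G"
  obtains l h u where "l \<le> card G" "\<And>j. j < l \<Longrightarrow> h j \<in> G \<and> 0 < u j"
    "(\<Sum>j<l. u j) = 1" "(\<Sum>j<l. u j *\<^sub>R h j) = y"
proof -
  obtain w where w_nonneg: "\<And>g. g \<in> G \<Longrightarrow> 0 \<le> w g" and "sum w G = 1"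
    and "(\<Sum>g\<in>G. w g *\<^sub>R g) = y"
    using assms by (auto simp: convex_hull_finite)
  define S where "S = {g \<in> G. 0 < w g}"
  have "S \<subseteq> G"
    by (auto simp: S_def)
  then have "finite S"
    using assms(1) finite_subset by blast
  then obtain h where h: "bij_betw h {..<card S} S"
    using ex_bij_betw_nat_finite unfolding lessThan_atLeast0 by blast
  have vanish: "w g = 0" if "g \<in> G - S" for g
    using w_nonneg[of g] that by (auto simp: S_def)
  have "sum w S = sum w G" "(\<Sum>g\<in>S. w g *\<^sub>R g) = (\<Sum>g\<in>G. w g *\<^sub>R g)"
    using vanish by (auto intro!: sum.mono_neutral_left[OF assms(1) \<open>S \<subseteq> G\<close>])
  then have "(\<Sum>j<card S. w (h j)) = sum w G"
    and "(\<Sum>j<card S. w (h j) *\<^sub>R h j) = (\<Sum>g\<in>G. w g *\<^sub>R g)"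
    using sum.reindex_bij_betw[OF h, of w] sum.reindex_bij_betw[OF h, of "\<lambda>g. w g *\<^sub>R g"]
    by simp_all
  moreover have "h j \<in> S" if "j < card S" for j
    using h that by (auto simp: bij_betw_def)
  ultimately show thesis
    using that[of "card S" h "\<lambda>j. w (h j)"] card_mono[OF assms(1) \<open>S \<subseteq> G\<close>]
      \<open>sum w G = 1\<close> \<open>(\<Sum>g\<in>G. w g *\<^sub>R g) = y\<close> by (auto simp: S_def)
qed

lemma exists_inner_le_convex_hull:
  fixes S :: "'a::real_inner set"
  assumes "finite S" "u \<in> convex hull S"
  shows "\<exists>s\<in>S. z \<bullet> u \<le> z \<bullet> s"
proof -
  have "S \<noteq> {}"
    using assms(2) by auto
  then have "Max ((\<lambda>t. z \<bullet> t) ` S) \<in> (\<lambda>t. z \<bullet> t) ` S"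
    using assms(1) by (intro Max_in) auto
  then obtain s where "s \<in> S" "z \<bullet> s = Max ((\<lambda>t. z \<bullet> t) ` S)"
    by auto
  then have s: "\<And>t. t \<in> S \<Longrightarrow> z \<bullet> t \<le> z \<bullet> s"
    using assms(1) by simp
  have "convex hull S \<subseteq> {v. z \<bullet> v \<le> z \<bullet> s}"
    by (rule hull_minimal) (use s convex_halfspace_le in auto)
  then show ?thesis
    using assms(2) \<open>s \<in> S\<close> by blast
qed

section \<open>Minimizing a maximum of linear forms over an affine space\<close>

locale max_linear_program =
  fixes A :: "'i set" and a :: "'i \<Rightarrow> 'v::euclidean_space" and K V :: "'v set"
  assumes finite_A: "finite A" and A_nonempty: "A \<noteq> {}"
    and subspace_V: "subspace V"
    and K_iff: "P \<in> K \<Longrightarrow> Q \<in> K \<longleftrightarrow> Q - P \<in> V"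
begin

definition F :: "'v \<Rightarrow> real" where
  "F Q = Max ((\<lambda>i. a i \<bullet> Q) ` A)"

definition minimizers :: "'v set" where
  "minimizers = {P \<in> K. \<forall>Q\<in>K. F P \<le> F Q}"

definition active :: "'v \<Rightarrow> 'i set" where
  "active P = {i \<in> A. a i \<bullet> P = F P}"

abbreviation grad :: "'i \<Rightarrow> 'v" where
  "grad i \<equiv> orth_proj V (a i)"

definition balanced :: "nat \<Rightarrow> bool" where
  "balanced l \<longleftrightarrow> (\<exists>P q \<alpha>. P \<in> minimizers \<and> (\<forall>j<l. q j \<in> active P \<and> 0 < \<alpha> j)
     \<and> (\<Sum>j<l. \<alpha> j) = 1 \<and> (\<forall>D\<in>V. (\<Sum>j<l. \<alpha> j * (a (q j) \<bullet> D)) = 0))"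

lemma F_le_iff: "F Q \<le> c \<longleftrightarrow> (\<forall>i\<in>A. a i \<bullet> Q \<le> c)"
  using finite_A A_nonempty by (simp add: F_def)

lemma F_less_iff: "F Q < c \<longleftrightarrow> (\<forall>i\<in>A. a i \<bullet> Q < c)"
  using finite_A A_nonempty by (simp add: F_def)

lemma inner_le_F: "i \<in> A \<Longrightarrow> a i \<bullet> Q \<le> F Q"
  using F_le_iff by blast

lemma continuous_on_F: "continuous_on S F"
  unfolding F_def[abs_def] using finite_A A_nonempty by (intro continuous_on_Max continuous_intros)

lemma grad_in_V: "grad i \<in> V"
  by (rule orth_proj_in[OF subspace_V])

lemma inner_grad: "D \<in> V \<Longrightarrow> a i \<bullet> D = grad i \<bullet> D"
  using inner_orth_proj[OF subspace_V] by (simp add: inner_commute)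

lemma finite_active: "finite (active P)"
  using finite_A by (simp add: active_def)

lemma minimizers_nonempty:
  assumes "P \<in> K" and bounded: "\<And>c. bounded {Q \<in> K. F Q \<le> c}"
  shows "minimizers \<noteq> {}"
proof -
  have "K = (+) P ` V"
    using K_iff[OF assms(1)] by (force intro: image_eqI[where x = "_ - P"])
  then have "closed K"
    by (metis closed_translation closed_subspace subspace_V)
  then have "compact {Q \<in> K. F Q \<le> F P}"
    using bounded closed_Collect_le[OF continuous_on_F continuous_on_const]
    by (simp add: compact_eq_bounded_closed Collect_conj_eq closed_Int)
  moreover have "P \<in> {Q \<in> K. F Q \<le> F P}"
    using assms(1) by simp
  ultimately obtain Q where Q: "Q \<in> {Q \<in> K. F Q \<le> F P}" "\<forall>R\<in>{Q \<in> K. F Q \<le> F P}. F Q \<le> F R"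
    using continuous_attains_inf[OF _ _ continuous_on_F] by blast
  then have "Q \<in> minimizers"
    unfolding minimizers_def by force
  then show ?thesis by blast
qed

lemma eventually_inactive_below:
  "\<forall>\<^sub>F D in nhds 0. \<forall>i\<in>A - active P. a i \<bullet> (P + D) < F P"
proof (rule eventually_ball_finite)
  show "finite (A - active P)"
    using finite_A by simp
  show "\<forall>i\<in>A - active P. \<forall>\<^sub>F D in nhds 0. a i \<bullet> (P + D) < F P"
  proof
    fix i assume i: "i \<in> A - active P"
    then have "a i \<bullet> (P + 0) < F P"
      using inner_le_F[of i P] by (auto simp: active_def)
    moreover have "((\<lambda>D. a i \<bullet> (P + D)) \<longlongrightarrow> a i \<bullet> (P + 0)) (nhds 0)"
      by (intro tendsto_intros filterlim_ident)
    ultimately show "\<forall>\<^sub>F D in nhds 0. a i \<bullet> (P + D) < F P"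
      by (simp add: order_tendstoD(2))
  qed
qed

lemma add_mem_minimizers:
  assumes P: "P \<in> minimizers" and D: "D \<in> V"
    and active_le: "\<And>i. i \<in> active P \<Longrightarrow> a i \<bullet> D \<le> 0"
    and inactive_less: "\<And>i. i \<in> A - active P \<Longrightarrow> a i \<bullet> (P + D) < F P"
  shows "P + D \<in> minimizers"
proof -
  have "P \<in> K" and min: "\<And>Q. Q \<in> K \<Longrightarrow> F P \<le> F Q"
    using P by (auto simp: minimizers_def)
  then have "P + D \<in> K"
    using K_iff[OF \<open>P \<in> K\<close>] D by simp
  moreover have "F (P + D) \<le> F P"
    unfolding F_le_iff
  proof
    fix i assume "i \<in> A"
    then show "a i \<bullet> (P + D) \<le> F P"
      using active_le[of i] inactive_less[of i]
      by (cases "i \<in> active P") (auto simp: active_def inner_add_right)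
  qed
  ultimately show ?thesis
    using min by (force simp: minimizers_def)
qed

lemma exists_active_nonneg:
  assumes P: "P \<in> minimizers" and D: "D \<in> V"
  shows "\<exists>i\<in>active P. 0 \<le> a i \<bullet> D"
proof (rule ccontr)
  assume "\<not> ?thesis"
  then have descent: "\<And>i. i \<in> active P \<Longrightarrow> a i \<bullet> D < 0"
    by force
  have "((\<lambda>s. s *\<^sub>R D) \<longlongrightarrow> 0) (at_right 0)"
    by (auto intro!: tendsto_eq_intros)
  from eventually_compose_filterlim[OF eventually_inactive_below this]
  have "\<forall>\<^sub>F s in at_right 0. 0 < s \<and> (\<forall>i\<in>A - active P. a i \<bullet> (P + s *\<^sub>R D) < F P)"
    by (simp add: eventually_conj_iff eventually_at_right_less)
  then obtain s where s: "0 < s" "\<And>i. i \<in> A - active P \<Longrightarrow> a i \<bullet> (P + s *\<^sub>R D) < F P"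
    using eventually_happens'[OF trivial_limit_at_right_real] by blast
  have "P \<in> K"
    using P by (simp add: minimizers_def)
  then have "P + s *\<^sub>R D \<in> K"
    using K_iff[OF \<open>P \<in> K\<close>] D subspace_scale[OF subspace_V] by simp
  moreover have "F (P + s *\<^sub>R D) < F P"
    unfolding F_less_iff
  proof
    fix i assume "i \<in> A"
    then show "a i \<bullet> (P + s *\<^sub>R D) < F P"
      using s descent[of i] mult_pos_neg[OF s(1), of "a i \<bullet> D"]
      by (cases "i \<in> active P") (auto simp: active_def inner_add_right)
  qed
  ultimately show False
    using P by (force simp: minimizers_def)
qed


lemma zero_in_convex_hull_grad_active:
  assumes P: "P \<in> minimizers"
  shows "0 \<in> convex hull (grad ` active P)"
proof (rule ccontr)
  assume "0 \<notin> convex hull (grad ` active P)"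
  moreover have "closed (convex hull (grad ` active P))"
    using finite_active by (simp add: compact_imp_closed finite_imp_compact_convex_hull)
  ultimately obtain c b where "0 < b" and sep: "\<And>x. x \<in> convex hull (grad ` active P) \<Longrightarrow> b < c \<bullet> x"
    using separating_hyperplane_closed_0[OF convex_convex_hull] by blast
  define D where "D = - orth_proj V c"
  have "D \<in> V"
    unfolding D_def by (rule subspace_neg[OF subspace_V orth_proj_in[OF subspace_V]])
  moreover have "a i \<bullet> D < 0" if "i \<in> active P" for i
  proof -
    have "a i \<bullet> D = - (grad i \<bullet> orth_proj V c)"
      using inner_grad[OF \<open>D \<in> V\<close>] by (simp add: D_def)
    also have "\<dots> = - (c \<bullet> grad i)"
      using inner_orth_proj[OF subspace_V grad_in_V] by (simp add: inner_commute)
    also have "\<dots> < - b"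
      using sep[of "grad i"] that by (simp add: hull_inc)
    finally show ?thesis
      using \<open>0 < b\<close> by simp
  qed
  ultimately show False
    using exists_active_nonneg[OF P] by force
qed

lemma balanced_if_zero_in_convex_hull:
  assumes P: "P \<in> minimizers" and G: "G \<subseteq> grad ` active P" and zero: "0 \<in> convex hull G"
  shows "\<exists>l \<le> card G. balanced l"
proof -
  have "finite G"
    using G finite_active finite_surj by blast
  obtain l h u where "l \<le> card G" and hu: "\<And>j. j < l \<Longrightarrow> h j \<in> G \<and> 0 < u j"
    and "(\<Sum>j<l. u j) = 1" and sum_zero: "(\<Sum>j<l. u j *\<^sub>R h j) = 0"
    by (rule convex_hull_finite_indexed[OF \<open>finite G\<close> zero]) blast
  have "\<forall>g\<in>G. \<exists>i. i \<in> active P \<and> grad i = g"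
    using G by blast
  then obtain r where r: "\<And>g. g \<in> G \<Longrightarrow> r g \<in> active P \<and> grad (r g) = g"
    using bchoice by metis
  have "(\<Sum>j<l. u j * (a (r (h j)) \<bullet> D)) = 0" if "D \<in> V" for D
  proof -
    have "(\<Sum>j<l. u j * (a (r (h j)) \<bullet> D)) = (\<Sum>j<l. u j *\<^sub>R h j) \<bullet> D"
      using hu r inner_grad[OF that] by (simp add: inner_sum_left)
    then show ?thesis
      using sum_zero by simp
  qed
  then have "balanced l"
    unfolding balanced_def using P hu r \<open>(\<Sum>j<l. u j) = 1\<close>
    by (intro exI[of _ P] exI[of _ "\<lambda>j. r (h j)"] exI[of _ u]) auto
  with \<open>l \<le> card G\<close> show ?thesis
    by blast
qed

lemma balanced_exists:
  assumes "minimizers \<noteq> {}"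
  shows "\<exists>l. balanced l"
  using assms balanced_if_zero_in_convex_hull[OF _ order_refl zero_in_convex_hull_grad_active]
  by blast

context
  fixes P :: 'v and q :: "nat \<Rightarrow> 'i" and \<alpha> :: "nat \<Rightarrow> real" and l :: nat
  assumes P: "P \<in> minimizers"
    and family: "\<And>j. j < l \<Longrightarrow> q j \<in> active P \<and> 0 < \<alpha> j"
    and sum_one: "(\<Sum>j<l. \<alpha> j) = 1"
    and balancing: "\<And>D. D \<in> V \<Longrightarrow> (\<Sum>j<l. \<alpha> j * (a (q j) \<bullet> D)) = 0"
begin

text \<open>The averaging argument: each form of the family attains the minimum value at every
  minimizer, because its weighted average does.\<close>

lemma balanced_family_constant_on_minimizers:
  assumes Q: "Q \<in> minimizers" and "j < l"
  shows "a (q j) \<bullet> (Q - P) = 0"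
proof -
  have "P \<in> K" "Q \<in> K" "F P = F Q"
    using P Q by (auto simp: minimizers_def intro: antisym)
  then have "Q - P \<in> V"
    using K_iff by blast
  have nonpos: "\<alpha> i * (a (q i) \<bullet> (Q - P)) \<le> 0" if "i < l" for i
  proof -
    have "a (q i) \<bullet> Q \<le> F Q"
      using inner_le_F family[OF that] by (auto simp: active_def)
    then have "a (q i) \<bullet> (Q - P) \<le> 0"
      using family[OF that] \<open>F P = F Q\<close> by (simp add: active_def inner_diff_right)
    then show ?thesis
      using family[OF that] by (simp add: mult_nonneg_nonpos)
  qed
  have "(\<Sum>i<l. - (\<alpha> i * (a (q i) \<bullet> (Q - P)))) = 0"
    using balancing[OF \<open>Q - P \<in> V\<close>] by (simp add: sum_negf)
  then have "\<forall>i\<in>{..<l}. - (\<alpha> i * (a (q i) \<bullet> (Q - P))) = 0"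
    by (subst (asm) sum_nonneg_eq_0_iff) (use nonpos in auto)
  then have "\<alpha> j * (a (q j) \<bullet> (Q - P)) = 0"
    using \<open>j < l\<close> by simp
  then show ?thesis
    using family[OF \<open>j < l\<close>] by simp
qed

lemma minimizers_subset_orthogonal:
  "minimizers \<subseteq> (+) P ` (V \<inter> ((\<lambda>j. grad (q j)) ` {..<l})\<^sup>\<bottom>)"
proof
  fix Q assume Q: "Q \<in> minimizers"
  have "P \<in> K" "Q \<in> K"
    using P Q by (auto simp: minimizers_def)
  then have "Q - P \<in> V"
    using K_iff by blast
  moreover have "orthogonal (grad (q j)) (Q - P)" if "j < l" for j
    using balanced_family_constant_on_minimizers[OF Q that] inner_grad[OF \<open>Q - P \<in> V\<close>]
    by (simp add: orthogonal_def)
  ultimately show "Q \<in> (+) P ` (V \<inter> ((\<lambda>j. grad (q j)) ` {..<l})\<^sup>\<bottom>)"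
    by (force simp: orthogonal_comp_def intro: image_eqI[where x = "Q - P"])
qed

lemma zero_in_convex_hull_balanced_family: "0 \<in> convex hull ((\<lambda>j. grad (q j)) ` {..<l})"
proof -
  define s where "s = (\<Sum>j<l. \<alpha> j *\<^sub>R grad (q j))"
  have "s \<in> V"
    unfolding s_def by (intro subspace_sum subspace_scale subspace_V grad_in_V)
  then have "s \<bullet> s = 0"
    using balancing[of s] inner_grad[of s] by (simp add: s_def inner_sum_left)
  then have "s = 0"
    by simp
  moreover have "s \<in> convex hull ((\<lambda>j. grad (q j)) ` {..<l})"
    unfolding s_def using family sum_one
    by (intro convex_sum convex_convex_hull) (auto intro: hull_inc less_imp_le)
  ultimately show ?thesis
    by simp
qed

text \<open>Caratheodory's theorem inside the affine hull of the gradients shortens any balanced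
  family to at most one more than their dimension.\<close>

lemma least_balanced_length_le_dim:
  assumes least: "\<And>l'. l' < l \<Longrightarrow> \<not> balanced l'"
  shows "l \<le> dim ((\<lambda>j. grad (q j)) ` {..<l}) + 1"
proof -
  let ?G = "(\<lambda>j. grad (q j)) ` {..<l}"
  obtain S u where S: "finite S" "S \<subseteq> ?G" "card S \<le> aff_dim ?G + 1"
    and u: "\<forall>x\<in>S. 0 \<le> u x" "sum u S = 1" "(\<Sum>v\<in>S. u v *\<^sub>R v) = 0"
    using zero_in_convex_hull_balanced_family unfolding convex_hull_caratheodory_aff_dim by blast
  have "0 \<in> convex hull S"
    using S(1) u by (auto simp: convex_hull_finite)
  moreover have "S \<subseteq> grad ` active P"
    using S(2) family by blast
  ultimately obtain l' where "l' \<le> card S" "balanced l'"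
    using balanced_if_zero_in_convex_hull[OF P] by blast
  then have "l \<le> card S"
    using least[of l'] by linarith
  then show ?thesis
    using S(3) aff_dim_eq_dim_if_zero_in_convex_hull[OF zero_in_convex_hull_balanced_family]
    by linarith
qed

end

lemma aff_dim_minimizers_le:
  assumes "balanced l" and least: "\<And>l'. l' < l \<Longrightarrow> \<not> balanced l'"
  shows "aff_dim minimizers \<le> int (dim V) - int l + 1"
proof -
  obtain P q \<alpha> where P: "P \<in> minimizers" and family: "\<And>j. j < l \<Longrightarrow> q j \<in> active P \<and> 0 < \<alpha> j"
    and sum_one: "(\<Sum>j<l. \<alpha> j) = 1"
    and balancing: "\<And>D. D \<in> V \<Longrightarrow> (\<Sum>j<l. \<alpha> j * (a (q j) \<bullet> D)) = 0"
    using \<open>balanced l\<close> unfolding balanced_def by blast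
  let ?G = "(\<lambda>j. grad (q j)) ` {..<l}"
  have "aff_dim minimizers \<le> aff_dim ((+) P ` (V \<inter> ?G\<^sup>\<bottom>))"
    by (rule aff_dim_subset[OF minimizers_subset_orthogonal[OF P family sum_one balancing]])
  moreover have "aff_dim ((+) P ` (V \<inter> ?G\<^sup>\<bottom>)) = int (dim (V \<inter> ?G\<^sup>\<bottom>))"
    using aff_dim_subspace[OF subspace_inter[OF subspace_V subspace_orthogonal_comp]]
    by (simp add: aff_dim_translation_eq)
  moreover have "dim (V \<inter> ?G\<^sup>\<bottom>) + dim ?G = dim V"
    by (rule dim_Int_orthogonal_comp[OF subspace_V]) (auto intro: grad_in_V)
  moreover have "l \<le> dim ?G + 1"
    by (rule least_balanced_length_le_dim[OF P family sum_one balancing least])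
  ultimately show ?thesis
    by linarith
qed

lemma aff_dim_minimizers_ge:
  assumes P: "P \<in> minimizers"
  shows "int (dim V) - int (card (active P)) + 1 \<le> aff_dim minimizers"
proof -
  let ?G = "grad ` active P"
  let ?W = "V \<inter> ?G\<^sup>\<bottom>"
  obtain \<rho> where "0 < \<rho>" and \<rho>: "\<And>D. norm D < \<rho> \<Longrightarrow> \<forall>i\<in>A - active P. a i \<bullet> (P + D) < F P"
    using eventually_inactive_below[of P] by (auto simp: eventually_nhds_metric dist_norm)
  have "(+) P ` (?W \<inter> ball 0 \<rho>) \<subseteq> minimizers"
  proof
    fix Q assume "Q \<in> (+) P ` (?W \<inter> ball 0 \<rho>)"
    then obtain D where D: "D \<in> V" "D \<in> ?G\<^sup>\<bottom>" "norm D < \<rho>" "Q = P + D"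
      by auto
    have "a i \<bullet> D = 0" if "i \<in> active P" for i
      using D(2) that inner_grad[OF D(1)] by (auto simp: orthogonal_comp_def orthogonal_def)
    then show "Q \<in> minimizers"
      using add_mem_minimizers[OF P D(1)] \<rho>[OF D(3)] D(4) by simp
  qed
  then have "aff_dim ((+) P ` (?W \<inter> ball 0 \<rho>)) \<le> aff_dim minimizers"
    by (rule aff_dim_subset)
  moreover have "aff_dim ((+) P ` (?W \<inter> ball 0 \<rho>)) = int (dim ?W)"
  proof -
    have "subspace ?W"
      by (rule subspace_inter[OF subspace_V subspace_orthogonal_comp])
    moreover have "0 \<in> ?W \<inter> ball 0 \<rho>"
      using \<open>0 < \<rho>\<close> subspace_0[OF \<open>subspace ?W\<close>] by simp
    ultimately have "aff_dim (?W \<inter> ball 0 \<rho>) = aff_dim ?W"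
      by (intro aff_dim_convex_Int_open subspace_imp_convex open_ball) blast+
    then show ?thesis
      using aff_dim_subspace[OF \<open>subspace ?W\<close>] by (simp add: aff_dim_translation_eq)
  qed
  moreover have "dim ?W + dim ?G = dim V"
    by (rule dim_Int_orthogonal_comp[OF subspace_V]) (auto intro: grad_in_V)
  moreover have "int (dim ?G) \<le> int (card (active P)) - 1"
    using aff_dim_eq_dim_if_zero_in_convex_hull[OF zero_in_convex_hull_grad_active[OF P]]
      aff_dim_le_card[of ?G] card_image_le[of "active P" grad] finite_active by simp
  ultimately show ?thesis
    by linarith
qed

theorem aff_dim_minimizers_bounds:
  assumes "minimizers \<noteq> {}"
  shows "int (dim V) - int (LEAST m. \<exists>P\<in>minimizers. card (active P) = m) + 1 \<le> aff_dim minimizers"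
    and "aff_dim minimizers \<le> int (dim V) - int (LEAST l. balanced l) + 1"
proof -
  have "\<exists>P\<in>minimizers. card (active P) = (LEAST m. \<exists>P\<in>minimizers. card (active P) = m)"
    by (rule LeastI_ex) (use assms in blast)
  then show "int (dim V) - int (LEAST m. \<exists>P\<in>minimizers. card (active P) = m) + 1
      \<le> aff_dim minimizers"
    using aff_dim_minimizers_ge by force
  show "aff_dim minimizers \<le> int (dim V) - int (LEAST l. balanced l) + 1"
    using aff_dim_minimizers_le[OF LeastI_ex[OF balanced_exists[OF assms]]] not_less_Least
    by blast
qed

end

section \<open>The affine space of projections onto a subspace\<close>

definition outer :: "real^'n \<Rightarrow> real^'m \<Rightarrow> real^'m^'n" where
  "outer y z = (\<chi> i j. y$i * z$j)"

lemma outer_mult_vec: "outer y z *v x = (z \<bullet> x) *\<^sub>R y"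
  by (simp add: outer_def matrix_vector_mult_def inner_vec_def vec_eq_iff sum_distrib_left mult_ac)

lemma inner_outer: "outer f x \<bullet> Q = f \<bullet> (Q *v x)"
  by (simp add: outer_def matrix_vector_mult_def inner_vec_def sum_distrib_left mult_ac)

lemma inner_outer_outer: "outer a b \<bullet> outer c d = (a \<bullet> c) * (b \<bullet> d)"
  by (simp add: inner_outer outer_mult_vec inner_commute)

lemma outer_scaleR_left: "outer (c *\<^sub>R y) z = c *\<^sub>R outer y z"
  by (simp add: outer_def vec_eq_iff)

lemma outer_sum_left: "outer (\<Sum>i\<in>I. y i) z = (\<Sum>i\<in>I. outer (y i) z)"
  by (induction I rule: infinite_finite_induct) (auto simp: outer_def vec_eq_iff distrib_right)

lemma matrix_sum_mult_vec: "(\<Sum>i\<in>I. M i) *v x = (\<Sum>i\<in>I. M i *v x)"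
  by (induction I rule: infinite_finite_induct) (auto simp: matrix_vector_mult_add_rdistrib)

definition proj_directions :: "(real^'n) set \<Rightarrow> (real^'n^'n) set" where
  "proj_directions Y = {D. (\<forall>x. D *v x \<in> Y) \<and> (\<forall>y\<in>Y. D *v y = 0)}"

context
  fixes Y :: "(real^'n) set"
  assumes Y: "subspace Y"
begin

lemma subspace_proj_directions: "subspace (proj_directions Y)"
  using Y by (auto simp: subspace_def proj_directions_def matrix_vector_mult_add_rdistrib
      scaleR_matrix_vector_assoc[symmetric])

lemma is_projection_iff_diff:
  assumes "is_projection P Y"
  shows "is_projection Q Y \<longleftrightarrow> Q - P \<in> proj_directions Y"
proof
  assume "is_projection Q Y"
  then show "Q - P \<in> proj_directions Y"
    using assms Y by (auto simp: is_projection_def proj_directions_def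
        matrix_vector_mult_diff_rdistrib subspace_diff)
next
  assume "Q - P \<in> proj_directions Y"
  moreover have "Q *v x = P *v x + (Q - P) *v x" for x
    by (simp add: matrix_vector_mult_diff_rdistrib)
  ultimately show "is_projection Q Y"
    using assms Y by (auto simp: is_projection_def proj_directions_def subspace_add)
qed

lemma is_projection_exists: "\<exists>P. is_projection P Y"
proof -
  obtain B where B: "B \<subseteq> Y" "pairwise orthogonal B" "\<And>b. b \<in> B \<Longrightarrow> norm b = 1"
    "independent B" "span B = Y"
    using orthonormal_basis_subspace[OF Y] by metis
  then have "finite B"
    using independent_imp_finite by blast
  define P where "P = (\<Sum>b\<in>B. outer b b)"
  have P: "P *v x = (\<Sum>b\<in>B. (b \<bullet> x) *\<^sub>R b)" for x
    by (simp add: P_def matrix_sum_mult_vec outer_mult_vec)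
  have "P *v x \<in> Y" for x
    unfolding P using B(1) Y by (auto intro!: subspace_sum subspace_scale)
  moreover have "P *v y = y" if "y \<in> Y" for y
    unfolding P using orthonormal_expansion[OF \<open>finite B\<close> B(2,3)] that B(5) by simp
  ultimately show ?thesis
    by (auto simp: is_projection_def)
qed

lemma outer_in_proj_directions: "y \<in> Y \<Longrightarrow> z \<in> Y\<^sup>\<bottom> \<Longrightarrow> outer y z \<in> proj_directions Y"
  using Y by (auto simp: proj_directions_def outer_mult_vec orthogonal_comp_def orthogonal_def
      inner_commute subspace_scale)

lemma proj_directions_expansion:
  assumes D: "D \<in> proj_directions Y"
    and Z: "finite Z" "pairwise orthogonal Z" "\<And>z. z \<in> Z \<Longrightarrow> norm z = 1" "span Z = Y\<^sup>\<bottom>"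
  shows "D = (\<Sum>z\<in>Z. outer (D *v z) z)"
  unfolding matrix_eq
proof
  fix x
  obtain y w where yw: "y \<in> Y" "w \<in> Y\<^sup>\<bottom>" "x = y + w"
    using subspace_sum_orthogonal_comp[OF Y] by (metis UNIV_I set_plus_elim)
  have "D *v x = D *v w"
    using D yw by (simp add: proj_directions_def matrix_vector_right_distrib)
  also have "\<dots> = D *v (\<Sum>z\<in>Z. (z \<bullet> w) *\<^sub>R z)"
    using orthonormal_expansion[OF Z(1-3), of w] yw(2) Z(4) by simp
  also have "\<dots> = (\<Sum>z\<in>Z. (z \<bullet> x) *\<^sub>R (D *v z))"
  proof -
    have "z \<bullet> y = 0" if "z \<in> Z" for z
      using that yw(1) Z(4) span_base[of z Z]
      by (auto simp: orthogonal_comp_def orthogonal_def inner_commute)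
    then show ?thesis
      using yw(3)
      by (simp add: linear_sum[OF matrix_vector_mul_linear] o_def matrix_vector_mult_scaleR
          inner_add_right)
  qed
  finally show "D *v x = (\<Sum>z\<in>Z. outer (D *v z) z) *v x"
    by (simp add: matrix_sum_mult_vec outer_mult_vec)
qed


lemma proj_directions_eq_span: "proj_directions Y = span {outer y z | y z. y \<in> Y \<and> z \<in> Y\<^sup>\<bottom>}"
proof
  obtain Z where Z: "Z \<subseteq> Y\<^sup>\<bottom>" "pairwise orthogonal Z" "\<And>z. z \<in> Z \<Longrightarrow> norm z = 1"
    "independent Z" "span Z = Y\<^sup>\<bottom>"
    using orthonormal_basis_subspace[OF subspace_orthogonal_comp] by metis
  show "proj_directions Y \<subseteq> span {outer y z | y z. y \<in> Y \<and> z \<in> Y\<^sup>\<bottom>}"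
  proof
    fix D assume D: "D \<in> proj_directions Y"
    then have "D = (\<Sum>z\<in>Z. outer (D *v z) z)"
      using proj_directions_expansion Z independent_imp_finite by blast
    also have "\<dots> \<in> span {outer y z | y z. y \<in> Y \<and> z \<in> Y\<^sup>\<bottom>}"
      using D Z(1) by (intro span_sum span_base) (auto simp: proj_directions_def)
    finally show "D \<in> span {outer y z | y z. y \<in> Y \<and> z \<in> Y\<^sup>\<bottom>}" .
  qed
next
  show "span {outer y z | y z. y \<in> Y \<and> z \<in> Y\<^sup>\<bottom>} \<subseteq> proj_directions Y"
    by (rule span_minimal) (auto intro: outer_in_proj_directions subspace_proj_directions)
qed

lemma dim_proj_directions: "dim (proj_directions Y) = dim Y * (CARD('n) - dim Y)"
proof -
  obtain BY where BY: "BY \<subseteq> Y" "pairwise orthogonal BY" "\<And>y. y \<in> BY \<Longrightarrow> norm y = 1"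
    "independent BY" "card BY = dim Y" "span BY = Y"
    using orthonormal_basis_subspace[OF Y] by metis
  obtain BZ where BZ: "BZ \<subseteq> Y\<^sup>\<bottom>" "pairwise orthogonal BZ" "\<And>z. z \<in> BZ \<Longrightarrow> norm z = 1"
    "independent BZ" "card BZ = dim (Y\<^sup>\<bottom>)" "span BZ = Y\<^sup>\<bottom>"
    using orthonormal_basis_subspace[OF subspace_orthogonal_comp] by metis
  have "finite BY" "finite BZ"
    using BY(4) BZ(4) independent_imp_finite by blast+
  define B where "B = (\<lambda>(y, z). outer y z) ` (BY \<times> BZ)"
  have inner_B: "outer y z \<bullet> outer y' z' = (if y = y' \<and> z = z' then 1 else 0)"
    if "y \<in> BY" "z \<in> BZ" "y' \<in> BY" "z' \<in> BZ" for y z y' z'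
    using inner_orthonormal[OF BY(2,3)] inner_orthonormal[OF BZ(2,3)] that
    by (simp add: inner_outer_outer)
  have "inj_on (\<lambda>(y, z). outer y z) (BY \<times> BZ)"
  proof (rule inj_onI, clarify)
    fix y z y' z' assume "y \<in> BY" "z \<in> BZ" "y' \<in> BY" "z' \<in> BZ" "outer y z = outer y' z'"
    then show "y = y' \<and> z = z'"
      using inner_B[of y z y z] inner_B[of y z y' z'] by (simp split: if_splits)
  qed
  then have "card B = dim Y * dim (Y\<^sup>\<bottom>)"
    by (simp add: B_def card_image card_cartesian_product BY(5) BZ(5))
  moreover have "card B = dim (proj_directions Y)"
  proof (rule basis_card_eq_dim)
    show "B \<subseteq> proj_directions Y"
      using BY(1) BZ(1) outer_in_proj_directions by (auto simp: B_def)
    show "proj_directions Y \<subseteq> span B"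
    proof
      fix D assume D: "D \<in> proj_directions Y"
      then have "D = (\<Sum>z\<in>BZ. outer (D *v z) z)"
        using proj_directions_expansion \<open>finite BZ\<close> BZ by blast
      also have "\<dots> = (\<Sum>z\<in>BZ. \<Sum>y\<in>BY. (y \<bullet> (D *v z)) *\<^sub>R outer y z)"
      proof (rule sum.cong[OF refl])
        fix z
        have "D *v z \<in> span BY"
          using D BY(6) by (simp add: proj_directions_def)
        then show "outer (D *v z) z = (\<Sum>y\<in>BY. (y \<bullet> (D *v z)) *\<^sub>R outer y z)"
          using orthonormal_expansion[OF \<open>finite BY\<close> BY(2,3)]
          by (metis (no_types, lifting) outer_scaleR_left outer_sum_left sum.cong)
      qed
      also have "\<dots> \<in> span B"
        by (intro span_sum span_scale span_base) (auto simp: B_def)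
      finally show "D \<in> span B" .
    qed
    have "pairwise orthogonal B" "0 \<notin> B"
      using inner_B by (fastforce simp: B_def pairwise_def orthogonal_def)+
    then show "independent B"
      by (rule pairwise_orthogonal_independent)
  qed
  moreover have "dim (Y\<^sup>\<bottom>) + dim Y = CARD('n)"
    using dim_Int_orthogonal_comp[OF subspace_UNIV, of Y] by simp
  ultimately show ?thesis
    by (metis add_diff_cancel_right')
qed

text \<open>The right-hand side says that \<open>trace (D T) = 0\<close> for the operator \<open>T\<close> on the left.\<close>

lemma invariant_iff_trace_vanishes:
  "(\<forall>y\<in>Y. (\<Sum>i\<in>I. (c i * (f i \<bullet> y)) *\<^sub>R x i) \<in> Y) \<longleftrightarrow>
   (\<forall>D\<in>proj_directions Y. (\<Sum>i\<in>I. c i * (f i \<bullet> (D *v x i))) = 0)"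
proof -
  define T where "T y = (\<Sum>i\<in>I. (c i * (f i \<bullet> y)) *\<^sub>R x i)" for y
  define W where "W = (\<Sum>i\<in>I. c i *\<^sub>R outer (f i) (x i))"
  have W_outer: "outer y z \<bullet> W = z \<bullet> T y" for y z
    by (simp add: W_def T_def inner_sum_left inner_sum_right inner_outer_outer mult_ac
        inner_commute)
  have T_in_Y: "T y \<in> Y \<longleftrightarrow> (\<forall>z\<in>Y\<^sup>\<bottom>. outer y z \<bullet> W = 0)" for y
  proof -
    have "T y \<in> Y \<longleftrightarrow> T y \<in> Y\<^sup>\<bottom>\<^sup>\<bottom>"
      using orthogonal_comp_self[OF Y] by simp
    then show ?thesis
      by (simp add: W_outer orthogonal_comp_def orthogonal_def)
  qed
  define G where "G = {outer y z | y z. y \<in> Y \<and> z \<in> Y\<^sup>\<bottom>}"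
  have "(\<forall>y\<in>Y. T y \<in> Y) \<longleftrightarrow> (\<forall>D\<in>G. D \<bullet> W = 0)"
    unfolding G_def using T_in_Y by blast
  also have "\<dots> \<longleftrightarrow> W \<in> G\<^sup>\<bottom>"
    by (simp add: orthogonal_comp_def orthogonal_def)
  also have "\<dots> \<longleftrightarrow> W \<in> (proj_directions Y)\<^sup>\<bottom>"
    by (simp only: proj_directions_eq_span G_def orthogonal_comp_span)
  also have "\<dots> \<longleftrightarrow> (\<forall>D\<in>proj_directions Y. (\<Sum>i\<in>I. c i * (f i \<bullet> (D *v x i))) = 0)"
    by (simp add: orthogonal_comp_def orthogonal_def W_def inner_sum_right
        inner_commute[of _ "outer _ _"] inner_outer)
  finally show ?thesis
    by (simp add: T_def)
qed

end

section \<open>Polyhedral norms\<close>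

locale vec_norm =
  fixes N :: "real^'n \<Rightarrow> real"
  assumes is_norm: "is_norm N"
begin

lemma nonneg: "0 \<le> N x"
  and zero_iff: "N x = 0 \<longleftrightarrow> x = 0"
  and scaleR: "N (c *\<^sub>R x) = \<bar>c\<bar> * N x"
  and triangle: "N (x + y) \<le> N x + N y"
  using is_norm by (auto simp: is_norm_def)

lemma zero [simp]: "N 0 = 0"
  using zero_iff by simp

lemma minus [simp]: "N (- x) = N x"
  using scaleR[of "- 1" x] by simp

lemma pos: "x \<noteq> 0 \<Longrightarrow> 0 < N x"
  using nonneg zero_iff by (metis order_le_less)

lemma normalize: "x \<noteq> 0 \<Longrightarrow> N ((1 / N x) *\<^sub>R x) = 1"
  using pos[of x] by (simp add: scaleR)

lemma convex_unit_ball: "convex (unit_ball N)"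
  unfolding convex_def unit_ball_def
proof clarify
  fix x y :: "real^'n" and u v :: real
  assume "N x \<le> 1" "N y \<le> 1" "0 \<le> u" "0 \<le> v" "u + v = 1"
  then have "u * N x + v * N y \<le> 1"
    by (metis add_mono mult.right_neutral mult_left_mono)
  then show "N (u *\<^sub>R x + v *\<^sub>R y) \<le> 1"
    using triangle[of "u *\<^sub>R x" "v *\<^sub>R y"] \<open>0 \<le> u\<close> \<open>0 \<le> v\<close> by (simp add: scaleR)
qed

lemma inner_le_if_dual_ball: "f \<in> dual_ball N \<Longrightarrow> f \<bullet> z \<le> N z"
proof (cases "z = 0")
  case False
  assume "f \<in> dual_ball N"
  then have "f \<bullet> ((1 / N z) *\<^sub>R z) \<le> 1"
    using normalize[OF False] unfolding dual_ball_def mem_Collect_eq by (metis order_refl)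
  then show ?thesis
    using pos[OF False] by (simp add: pos_divide_le_eq)
qed (simp add: zero_iff)

text \<open>The functional comes from a supporting hyperplane of the unit ball at \<open>z / N z\<close>, which is not
  a relative interior point: the ball contains \<open>0\<close> but no \<open>e *\<^sub>R z / N z\<close> with \<open>e > 1\<close>.\<close>

lemma dual_ball_attains: "\<exists>f\<in>dual_ball N. f \<bullet> z = N z"
proof (cases "z = 0")
  case True
  then show ?thesis
    by (intro bexI[of _ 0]) (auto simp: dual_ball_def zero_iff)
next
  case False
  define w where "w = (1 / N z) *\<^sub>R z"
  have "N w = 1"
    unfolding w_def by (rule normalize[OF False])
  then have "w \<in> unit_ball N"
    by (simp add: unit_ball_def)
  have "w \<notin> rel_interior (unit_ball N)"
  proof
    assume "w \<in> rel_interior (unit_ball N)"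
    moreover have "0 \<in> affine hull (unit_ball N)"
      by (rule hull_inc) (simp add: unit_ball_def zero_iff)
    ultimately obtain e where "1 < e" "e *\<^sub>R w \<in> unit_ball N"
      using convex_rel_interior_if[OF convex_unit_ball] by fastforce
    then show False
      using \<open>N w = 1\<close> by (simp add: unit_ball_def scaleR)
  qed
  then obtain b where "b \<noteq> 0" and supp: "\<And>x. x \<in> unit_ball N \<Longrightarrow> b \<bullet> w \<le> b \<bullet> x"
    by (rule supporting_hyperplane_rel_boundary[OF convex_unit_ball \<open>w \<in> unit_ball N\<close>]) auto
  have "b \<bullet> ((1 / N b) *\<^sub>R b) \<le> - b \<bullet> w"
    using supp[of "- ((1 / N b) *\<^sub>R b)"] normalize[OF \<open>b \<noteq> 0\<close>] by (simp add: unit_ball_def)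
  moreover have "0 < b \<bullet> ((1 / N b) *\<^sub>R b)"
    using \<open>b \<noteq> 0\<close> pos[OF \<open>b \<noteq> 0\<close>] by simp
  ultimately have "0 < - b \<bullet> w"
    by simp
  define f where "f = (1 / (- b \<bullet> w)) *\<^sub>R (- b)"
  have "f \<in> dual_ball N"
    using supp \<open>0 < - b \<bullet> w\<close> by (auto simp: dual_ball_def unit_ball_def f_def field_simps)
  moreover have "f \<bullet> z = N z"
    using \<open>0 < - b \<bullet> w\<close> pos[OF False] by (simp add: f_def w_def field_simps)
  ultimately show ?thesis
    by blast
qed

lemma bounded_dual_ball: "bounded (dual_ball N)"
proof -
  have "\<bar>f $ j\<bar> \<le> N (axis j 1)" if "f \<in> dual_ball N" for f j
    using inner_le_if_dual_ball[OF that, of "axis j 1"]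
      inner_le_if_dual_ball[OF that, of "- axis j 1"]
    by (simp add: inner_axis)
  then have "norm f \<le> (\<Sum>j\<in>UNIV. N (axis j 1))" if "f \<in> dual_ball N" for f
    using that norm_le_l1_cart[of f] sum_mono[of UNIV "\<lambda>j. \<bar>f $ j\<bar>"] by (meson order_trans)
  then show ?thesis
    unfolding bounded_iff by blast
qed

end

definition extreme_pairs :: "(real^'n \<Rightarrow> real) \<Rightarrow> ((real^'n) \<times> (real^'n)) set" where
  "extreme_pairs N = {x. x extreme_point_of (unit_ball N)} \<times> {f. f extreme_point_of (dual_ball N)}"

locale polyhedral_norm = vec_norm N for N :: "real^'n \<Rightarrow> real" +
  assumes polytope_unit_ball: "polytope (unit_ball N)"
begin

lemma compact_unit_ball: "compact (unit_ball N)"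
  by (rule polytope_imp_compact[OF polytope_unit_ball])

lemma finite_extreme_unit_ball: "finite {x. x extreme_point_of (unit_ball N)}"
  by (rule finite_polyhedron_extreme_points[OF polytope_imp_polyhedron[OF polytope_unit_ball]])

lemma unit_ball_eq_hull: "unit_ball N = convex hull {x. x extreme_point_of (unit_ball N)}"
  by (rule Krein_Milman_Minkowski[OF compact_unit_ball convex_unit_ball])

lemma dual_ball_eq_polar: "dual_ball N = (\<Inter>x\<in>{x. x extreme_point_of (unit_ball N)}. {u. x \<bullet> u \<le> 1})"
proof -
  have "(\<forall>x. N x \<le> 1 \<longrightarrow> u \<bullet> x \<le> 1) \<longleftrightarrow> (\<forall>x. x extreme_point_of (unit_ball N) \<longrightarrow> x \<bullet> u \<le> 1)" for u
  proof
    assume "\<forall>x. x extreme_point_of (unit_ball N) \<longrightarrow> x \<bullet> u \<le> 1"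
    then have "convex hull {x. x extreme_point_of (unit_ball N)} \<subseteq> {x. u \<bullet> x \<le> 1}"
      by (intro hull_minimal convex_halfspace_le) (auto simp: inner_commute)
    then show "\<forall>x. N x \<le> 1 \<longrightarrow> u \<bullet> x \<le> 1"
      using unit_ball_eq_hull by (auto simp: unit_ball_def)
  qed (auto simp: extreme_point_of_def unit_ball_def inner_commute)
  then show ?thesis
    by (auto simp: dual_ball_def)
qed

lemma compact_dual_ball: "compact (dual_ball N)"
  and polyhedron_dual_ball: "polyhedron (dual_ball N)"
proof -
  show "polyhedron (dual_ball N)"
    unfolding dual_ball_eq_polar using finite_extreme_unit_ball
    by (intro polyhedron_Inter) (auto intro: polyhedron_halfspace_le)
  then show "compact (dual_ball N)"
    using bounded_dual_ball polyhedron_imp_closed by (simp add: compact_eq_bounded_closed)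
qed

lemma convex_dual_ball: "convex (dual_ball N)"
  by (rule polyhedron_imp_convex[OF polyhedron_dual_ball])

lemma finite_extreme_dual_ball: "finite {f. f extreme_point_of (dual_ball N)}"
  by (rule finite_polyhedron_extreme_points[OF polyhedron_dual_ball])

lemma dual_ball_eq_hull: "dual_ball N = convex hull {f. f extreme_point_of (dual_ball N)}"
  by (rule Krein_Milman_Minkowski[OF compact_dual_ball convex_dual_ball])

lemma finite_extreme_pairs: "finite (extreme_pairs N)"
  using finite_extreme_unit_ball finite_extreme_dual_ball by (simp add: extreme_pairs_def)

lemma extreme_pairs_nonempty: "extreme_pairs N \<noteq> {}"
proof -
  have "0 \<in> unit_ball N" "0 \<in> dual_ball N"
    by (simp_all add: unit_ball_def dual_ball_def)
  obtain x where "x extreme_point_of (unit_ball N)"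
    by (rule extreme_point_exists_convex[OF compact_unit_ball convex_unit_ball])
      (use \<open>0 \<in> unit_ball N\<close> in auto)
  moreover obtain f where "f extreme_point_of (dual_ball N)"
    by (rule extreme_point_exists_convex[OF compact_dual_ball convex_dual_ball])
      (use \<open>0 \<in> dual_ball N\<close> in auto)
  ultimately show ?thesis
    by (auto simp: extreme_pairs_def)
qed

text \<open>A bilinear form on the product of two polytopes is maximal at a pair of vertices.\<close>

lemma mult_vec_le_Max: "N x \<le> 1 \<Longrightarrow> N (Q *v x) \<le> Max ((\<lambda>(x, f). f \<bullet> (Q *v x)) ` extreme_pairs N)"
proof -
  assume "N x \<le> 1"
  obtain f where "f \<in> dual_ball N" and f: "f \<bullet> (Q *v x) = N (Q *v x)"
    using dual_ball_attains by blast
  obtain x' where x': "x' extreme_point_of (unit_ball N)" "(f v* Q) \<bullet> x \<le> (f v* Q) \<bullet> x'"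
    using exists_inner_le_convex_hull[OF finite_extreme_unit_ball, of x] \<open>N x \<le> 1\<close> unit_ball_eq_hull
    by (auto simp: unit_ball_def)
  obtain f' where f': "f' extreme_point_of (dual_ball N)" "(Q *v x') \<bullet> f \<le> (Q *v x') \<bullet> f'"
    using exists_inner_le_convex_hull[OF finite_extreme_dual_ball, of f] \<open>f \<in> dual_ball N\<close>
      dual_ball_eq_hull by auto
  have "N (Q *v x) \<le> f \<bullet> (Q *v x')"
    using f x'(2) by (simp add: dot_lmul_matrix)
  also have "\<dots> \<le> f' \<bullet> (Q *v x')"
    using f'(2) by (simp add: inner_commute)
  also have "\<dots> \<le> Max ((\<lambda>(x, f). f \<bullet> (Q *v x)) ` extreme_pairs N)"
    using x'(1) f'(1) finite_extreme_pairs by (intro Max_ge) (auto simp: extreme_pairs_def)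
  finally show ?thesis .
qed

lemma op_norm_eq_Max: "op_norm N Q = Max ((\<lambda>(x, f). f \<bullet> (Q *v x)) ` extreme_pairs N)"
proof -
  let ?M = "Max ((\<lambda>(x, f). f \<bullet> (Q *v x)) ` extreme_pairs N)"
  obtain x f where xf: "(x, f) \<in> extreme_pairs N" "f \<bullet> (Q *v x) = ?M"
    using Max_in[of "(\<lambda>(x, f). f \<bullet> (Q *v x)) ` extreme_pairs N"] finite_extreme_pairs
      extreme_pairs_nonempty by fastforce
  then have "N x \<le> 1" "f \<in> dual_ball N"
    by (auto simp: extreme_pairs_def extreme_point_of_def unit_ball_def)
  then have "N (Q *v x) = ?M"
    using xf(2) inner_le_if_dual_ball[of f "Q *v x"] mult_vec_le_Max[of x Q] by linarith
  show ?thesis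
    unfolding op_norm_def
  proof (rule cSup_eq_maximum)
    show "?M \<in> {N (Q *v x) |x. N x \<le> 1}"
      using \<open>N (Q *v x) = ?M\<close> \<open>N x \<le> 1\<close> by force
  qed (use mult_vec_le_Max in blast)
qed

lemma le_op_norm: "N x \<le> 1 \<Longrightarrow> N (Q *v x) \<le> op_norm N Q"
  using mult_vec_le_Max op_norm_eq_Max by simp

lemma mult_vec_le_op_norm: "N (Q *v x) \<le> op_norm N Q * N x"
proof (cases "x = 0")
  case False
  have "N (Q *v ((1 / N x) *\<^sub>R x)) \<le> op_norm N Q"
    using le_op_norm normalize[OF False] by simp
  then show ?thesis
    using pos[OF False] by (simp add: matrix_vector_mult_scaleR scaleR field_simps)
qed (simp add: zero_iff)

lemma norm_le_mult_N: "\<exists>R\<ge>0. \<forall>x. norm x \<le> R * N x"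
proof -
  obtain R where R: "\<And>x. x \<in> unit_ball N \<Longrightarrow> norm x \<le> R"
    using compact_imp_bounded[OF compact_unit_ball] by (auto simp: bounded_iff)
  have "norm x \<le> R * N x" for x
  proof (cases "x = 0")
    case False
    then have "(1 / N x) *\<^sub>R x \<in> unit_ball N"
      using normalize by (simp add: unit_ball_def)
    then have "norm ((1 / N x) *\<^sub>R x) \<le> R"
      by (rule R)
    then show ?thesis
      using pos[OF False] by (simp add: pos_divide_le_eq mult.commute)
  qed simp
  moreover have "0 \<le> R"
    using R[of 0] by (simp add: unit_ball_def)
  ultimately show ?thesis
    by blast
qed

lemma bounded_op_norm_le: "bounded {Q. op_norm N Q \<le> c}"
proof -
  obtain R where "0 \<le> R" and norm_le: "\<And>x. norm x \<le> R * N x"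
    using norm_le_mult_N by blast
  have "norm Q \<le> (\<Sum>i\<in>(UNIV :: 'n set). \<Sum>j\<in>UNIV. R * (c * N (axis j 1)))"
    if "op_norm N Q \<le> c" for Q
  proof -
    have entry_le: "\<bar>Q $ i $ j\<bar> \<le> R * (c * N (axis j 1))" for i j
    proof -
      have "\<bar>Q $ i $ j\<bar> \<le> norm (Q *v axis j 1)"
        using component_le_norm_cart[of "Q *v axis j 1" i]
        by (simp add: matrix_vector_mult_basis column_def)
      also have "\<dots> \<le> R * (op_norm N Q * N (axis j 1))"
        by (rule order_trans[OF norm_le mult_left_mono[OF mult_vec_le_op_norm \<open>0 \<le> R\<close>]])
      also have "\<dots> \<le> R * (c * N (axis j 1))"
        using that \<open>0 \<le> R\<close> nonneg by (intro mult_left_mono mult_right_mono) auto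
      finally show ?thesis .
    qed
    have "norm Q \<le> (\<Sum>i\<in>UNIV. norm (Q $ i))"
      unfolding norm_vec_def by (rule L2_set_le_sum) simp
    also have "\<dots> \<le> (\<Sum>i\<in>UNIV. \<Sum>j\<in>UNIV. \<bar>Q $ i $ j\<bar>)"
      by (intro sum_mono norm_le_l1_cart)
    also have "\<dots> \<le> (\<Sum>i\<in>(UNIV :: 'n set). \<Sum>j\<in>UNIV. R * (c * N (axis j 1)))"
      by (intro sum_mono entry_le)
    finally show ?thesis .
  qed
  then show ?thesis
    unfolding bounded_iff by blast
qed

end

section \<open>Minimal projections\<close>

locale polyhedral_projection = polyhedral_norm N for N :: "real^'n \<Rightarrow> real" +
  fixes Y :: "(real^'n) set"
  assumes subspace_Y: "subspace Y"

sublocale polyhedral_projection \<subseteq> proj: max_linear_program "extreme_pairs N"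
  "\<lambda>(x, f). outer f x" "{P. is_projection P Y}" "proj_directions Y"
  by unfold_locales (simp_all add: finite_extreme_pairs extreme_pairs_nonempty
      subspace_proj_directions[OF subspace_Y] is_projection_iff_diff[OF subspace_Y])

context polyhedral_projection
begin

lemma op_norm_eq_F: "op_norm N Q = proj.F Q"
  unfolding op_norm_eq_Max proj.F_def by (simp add: case_prod_beta inner_outer)

lemma exists_minimal_projection: "proj.minimizers \<noteq> {}"
proof -
  obtain P where "is_projection P Y"
    using is_projection_exists[OF subspace_Y] by blast
  moreover have "bounded {Q \<in> {P. is_projection P Y}. proj.F Q \<le> c}" for c
    using bounded_op_norm_le[of c] by (rule bounded_subset) (auto simp: op_norm_eq_F)
  ultimately show ?thesis
    by (intro proj.minimizers_nonempty) auto
qed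

lemma min_projections_eq_minimizers: "min_projections N Y = proj.minimizers"
proof -
  obtain P where P: "P \<in> proj.minimizers"
    using exists_minimal_projection by blast
  then have "proj_const N Y = proj.F P"
    unfolding proj_const_def op_norm_eq_F
    by (intro cInf_eq_minimum) (auto simp: proj.minimizers_def)
  then show ?thesis
    using P by (force simp: min_projections_def proj.minimizers_def op_norm_eq_F)
qed

lemma norming_pairs_eq_active: "norming_pairs N P = proj.active P"
  unfolding norming_pairs_def proj.active_def
  by (auto simp: extreme_pairs_def op_norm_eq_F inner_outer)

lemma CM_supported_iff_balanced: "CM_supported N Y l \<longleftrightarrow> proj.balanced l"
proof -
  have F_min: "proj.F P = proj_const N Y" if "P \<in> proj.minimizers" for P
    using that unfolding min_projections_eq_minimizers[symmetric]
    by (simp add: min_projections_def op_norm_eq_F)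
  have active_iff: "(x, f) \<in> proj.active P \<longleftrightarrow> x extreme_point_of (unit_ball N) \<and>
      f extreme_point_of (dual_ball N) \<and> f \<bullet> (P *v x) = proj_const N Y"
    if "P \<in> proj.minimizers" for P x f
    using F_min[OF that] unfolding proj.active_def by (auto simp: extreme_pairs_def inner_outer)
  have trace_iff: "(\<forall>y\<in>Y. (\<Sum>i<l. (\<alpha> i * (f i \<bullet> y)) *\<^sub>R x i) \<in> Y) \<longleftrightarrow>
      (\<forall>D\<in>proj_directions Y. (\<Sum>j<l. \<alpha> j * ((case (x j, f j) of (x, f) \<Rightarrow> outer f x) \<bullet> D)) = 0)"
    for x f :: "nat \<Rightarrow> real^'n" and \<alpha>
    using invariant_iff_trace_vanishes[OF subspace_Y] by (simp add: inner_outer)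
  show ?thesis
  proof
    assume "CM_supported N Y l"
    then obtain x f \<alpha> P where "P \<in> proj.minimizers"
      and "\<forall>i<l. x i extreme_point_of (unit_ball N) \<and> f i extreme_point_of (dual_ball N) \<and>
              \<alpha> i > 0 \<and> f i \<bullet> (P *v x i) = proj_const N Y"
      and "(\<Sum>i<l. \<alpha> i) = 1" and "\<forall>y\<in>Y. (\<Sum>i<l. (\<alpha> i * (f i \<bullet> y)) *\<^sub>R x i) \<in> Y"
      unfolding CM_supported_def min_projections_eq_minimizers by blast
    then show "proj.balanced l"
      unfolding proj.balanced_def trace_iff using active_iff
      by (intro exI[of _ P] exI[of _ "\<lambda>j. (x j, f j)"] exI[of _ \<alpha>]) auto
  next
    assume "proj.balanced l"
    then obtain P q \<alpha> where balanced: "P \<in> proj.minimizers" "\<forall>j<l. q j \<in> proj.active P \<and> 0 < \<alpha> j"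
      "(\<Sum>j<l. \<alpha> j) = 1"
      "\<forall>D\<in>proj_directions Y. (\<Sum>j<l. \<alpha> j * ((case q j of (x, f) \<Rightarrow> outer f x) \<bullet> D)) = 0"
      unfolding proj.balanced_def by blast
    have pairs: "fst (q j) extreme_point_of (unit_ball N) \<and> snd (q j) extreme_point_of (dual_ball N)
        \<and> snd (q j) \<bullet> (P *v fst (q j)) = proj_const N Y" if "j < l" for j
      using active_iff[OF balanced(1), of "fst (q j)" "snd (q j)"] balanced(2) that by simp
    show "CM_supported N Y l"
      unfolding CM_supported_def min_projections_eq_minimizers
    proof (rule exI[of _ "\<lambda>j. fst (q j)"], rule exI[of _ "\<lambda>j. snd (q j)"], rule exI[of _ \<alpha>],
        rule exI[of _ P])
    qed (use balanced pairs trace_iff[of \<alpha> "\<lambda>j. snd (q j)" "\<lambda>j. fst (q j)"] in auto)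
  qed
qed

end

theorem mainTheorem10:
  fixes N :: "real^'n \<Rightarrow> real" and Y :: "(real^'n) set" and k :: nat
  assumes "polyhedral N"
    and "subspace Y" and "dim Y = k"
    and "1 \<le> k" and "k \<le> CARD('n) - 1"
  shows "int (k * (CARD('n) - k)) - int (min_norming_pairs N Y) + 1 \<le> aff_dim (min_projections N Y)
       \<and> aff_dim (min_projections N Y) \<le> int (k * (CARD('n) - k)) - int (min_CM_support N Y) + 1"
proof -
  (* The bounds hold for every k. *)
  interpret polyhedral_projection N Y
    using assms(1,2) by unfold_locales (auto simp: polyhedral_def)
  have "dim (proj_directions Y) = k * (CARD('n) - k)"
    using dim_proj_directions[OF assms(2)] assms(3) by simp
  moreover have "min_norming_pairs N Y = (LEAST m. \<exists>P\<in>proj.minimizers. card (proj.active P) = m)"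
    by (simp add: min_norming_pairs_def min_projections_eq_minimizers norming_pairs_eq_active)
  moreover have "min_CM_support N Y = (LEAST l. proj.balanced l)"
    by (simp add: min_CM_support_def CM_supported_iff_balanced)
  ultimately show ?thesis
    using proj.aff_dim_minimizers_bounds[OF exists_minimal_projection]
      min_projections_eq_minimizers by simp
qed


end
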